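(* Let $G$ be a stochastic game with generalized-reachability objective $\mathcal T$ of dimension $n$, and let $L,U:S\to 2^{[0,1]^n}$ be functions such that $L(s)\subseteq\mathfrak A(s)\subseteq U(s)$ for all $s\in S$. Let $U'=\mathsf{DEFLATE\_SECs}(G,L,U)$. Then for all $s\in S$: (i) $U'(s)\subseteq U(s)$ (monotonicity), and (ii) $\mathfrak A(s)\subseteq U'(s)$ (soundness).
   Context: Stochastic game $G=(S,S_\Box,S_\circ,s_0,A,\mathrm{Av},\delta)$: $S$ finite set of states partitioned into Maximizer states $S_\Box$ and Minimizer states $S_\circ$, $s_0$ initial state, $A$ finite action set, $\mathrm{Av}(s)\neq\emptyset$ the actions available in $s$, $\delta(s,a)$ a probability distribution on $S$ for $a\in\mathrm{Av}(s)$. Strategies are history-dependent and randomized; a pair $(\sigma,\tau)$ of Maximizer/Minimizer strategies and a start state $s$ induce a probability measure $\mathbb P^{\sigma,\tau}_s$ on infinite paths. Objective $\mathcal T=(T_1,\dots,T_n)$, $T_i\subseteq S$; $\Diamond T_i$ is the event of visiting $T_i$. $\mathfrak A(s)$ is the set of $\vec v\in\mathbb R^n_{\ge0}$ such that some Maximizer strategy $\sigma$ satisfies $\mathbb P^{\sigma,\tau}_s(\Diamond T_i)\ge\vec v_i$ for all Minimizer strategies $\tau$ and all $i$. Geometry: vectors compared componentwise; $\mathit{dwc}(X)=\{y\in\mathbb R^n_{\ge0}\mid\exists x\in X: y\le x\}$; $\mathbf 1=\mathit{dwc}(\{\vec 1\})$; $c\cdot X=\{cx\mid x\in X\}$; $X+Y$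 is the Minkowski sum; $\mathrm{conv}$ the convex hull. Directions: $[\vec v]=\{\lambda\vec v\mid\lambda>0\}$ for $\vec v\ne\vec 0$, $\mathsf D$ = set of directions $[\vec v]$, $\vec v\in[0,1]^n\setminus\{\vec0\}$. $X[\mathbf d]=\sup\{\|\vec x\|\mid\vec x\in X,[\vec x]=\mathbf d\}$, $\sup\emptyset=0$. A region is a subset $R\subseteq\mathsf D$; when intersected with sets of points, $R$ is identified with $\{\vec v\in[0,1]^n\mid [\vec v]\in R\}$. For $f:S\to 2^{\mathbb R^n}$, $s\in S$, $a\in\mathrm{Av}(s)$: $f(s,a):=\big(\mathit{dwc}(\{\mathbb 1_{\mathcal T}(s)\})+\sum_{s'\in S}\delta(s,a)(s')\cdot f(s')\big)\cap\mathbf 1$, where $\mathbb 1_{\mathcal T}(s)_i=1$ if $s\in T_i$ and $0$ otherwise. End components: $(s,a)$ exits $T\subseteq S$ if some $s'$ with $\delta(s,a)(s')>0$ is not in $T$; $\mathsf{Exits}(T)$ is the set of such pairs with $s\in T$, $a\in\mathrm{Av}(s)$. A nonempty $T\subseteq S$ is an end component (EC) if there is a nonempty set $B$ of actions available in $T$ such that no $(s,a)$ with $s\in T$, $a\in B\cap\mathrm{Av}(s)$ exits $T$, and any two states of $T$ are connected by a path staying in $T$ and using only actions of $B$. A maximal EC (MEC) is an EC not strictly contained in another EC; $\mathsf{MEC}(G)$ is the set of MECs of $G$. For $T\subseteq S$ and a restriction $\mathrm{Av}'$ of $\mathrm{Av}$, $\mathsf{MEC}(T|_{\mathrm{Av}'})$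 denotes the MECs of the game restricted to states in $T$ and actions in $\mathrm{Av}'$. Best exit: for $T\subseteq S$ and $f:S\to2^{\mathbb R^n}$, $\mathsf{exit}[f](T):=\big(\mathit{dwc}(\{\sum_{s\in T}\mathbb 1_{\mathcal T}(s)\})+\mathrm{conv}(\bigcup_{(s,a)\in\mathsf{Exits}(T),\,s\in S_\Box} f(s,a))\big)\cap\mathbf 1$, with the convention $\bigcup_\emptyset=\{\vec0\}$. Procedures. $\mathsf{GET\_REGIONS}(T,L)$: start with $\mathcal R=\{\mathsf D\}$; for each $s\in T\cap S_\circ$, for each $B\subseteq\mathrm{Av}(s)$ let $R_B=\{\mathbf d\in\mathsf D\mid B=\arg\min_{a\in\mathrm{Av}(s)}L(s,a)[\mathbf d]\}$, let $\mathcal R'$ be the set of nonempty $R_B$, and replace $\mathcal R$ by the common refinement of $\mathcal R$ and $\mathcal R'$ (coarsest partition containing all sets $R_1\cap R_2$, $R_1\in\mathcal R,R_2\in\mathcal R'$); return $\mathcal R$. $\mathsf{FIND\_SECs}(T,L,R)$: pick any $\mathbf d\in R$; let $\mathrm{Av}'(s)=\mathrm{Av}(s)$ for $s\notin T\cap S_\circ$ and $\mathrm{Av}'(s)=\{a\in\mathrm{Av}(s)\mid L(s,a)[\mathbf d]=\min_{b\in\mathrm{Av}(s)}L(s,b)[\mathbf d]\}$ for $s\in T\cap S_\circ$; return $\mathsf{MEC}(T|_{\mathrm{Av}'})$. $\mathsf{DEFLATE\_SECs}(G,L,U)$: for states $s$ not in any MEC set $U'(s)=U(s)$; for states in MECs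 initialize $U'(s)=\{\vec 0\}$; for each $T\in\mathsf{MEC}(G)$, let $\mathcal R=\mathsf{GET\_REGIONS}(T,L)$; for each $R\in\mathcal R$, let $\mathcal S=\mathsf{FIND\_SECs}(T,L,R)$, and for each $s\in T$: if $s\in C$ for some $C\in\mathcal S$ then $U'(s)\leftarrow U'(s)\cup(U(s)\cap\mathsf{exit}[U](C)\cap R)$, else $U'(s)\leftarrow U'(s)\cup(U(s)\cap R)$; return $U'$. *)

theory Defs
  imports "HOL-Probability.Probability"
begin

text \<open>States have a finite type 's (so S = UNIV), actions a finite type 'a (so A = UNIV).
  Maximizer states are smax; Minimizer states are the complement.
  Objective dimension n is the cardinality of the finite index type 'n;
  vectors in R^n are real^'n.\<close>

record ('s, 'a) sgame =
  smax  :: "'s set"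
  av    :: "'s \<Rightarrow> 'a set"
  delta :: "'s \<Rightarrow> 'a \<Rightarrow> 's pmf"

definition wf_game :: "('s::finite, 'a::finite) sgame \<Rightarrow> bool" where
  "wf_game G \<longleftrightarrow> (\<forall>s. av G s \<noteq> {})"

type_synonym ('s, 'a) hist = "('s \<times> 'a) list \<times> 's"

definition is_strategy :: "('s, 'a) sgame \<Rightarrow> 's set \<Rightarrow> (('s, 'a) hist \<Rightarrow> 'a pmf) \<Rightarrow> bool" where
  "is_strategy G P \<sigma> \<longleftrightarrow> (\<forall>h. snd h \<in> P \<longrightarrow> set_pmf (\<sigma> h) \<subseteq> av G (snd h))"

definition max_strategy where "max_strategy G \<sigma> \<longleftrightarrow> is_strategy G (smax G) \<sigma>"
definition min_strategy where "min_strategy G \<tau> \<longleftrightarrow> is_strategy G (- smax G) \<tau>"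

definition game_step ::
  "('s, 'a) sgame \<Rightarrow> (('s, 'a) hist \<Rightarrow> 'a pmf) \<Rightarrow> (('s, 'a) hist \<Rightarrow> 'a pmf)
     \<Rightarrow> ('s, 'a) hist \<Rightarrow> ('s, 'a) hist pmf" where
  "game_step G \<sigma> \<tau> h =
     bind_pmf (if snd h \<in> smax G then \<sigma> h else \<tau> h) (\<lambda>a.
     map_pmf (\<lambda>s'. (fst h @ [(snd h, a)], s')) (delta G (snd h) a))"

definition hist_dist ::
  "('s, 'a) sgame \<Rightarrow> (('s, 'a) hist \<Rightarrow> 'a pmf) \<Rightarrow> (('s, 'a) hist \<Rightarrow> 'a pmf)
     \<Rightarrow> 's \<Rightarrow> nat \<Rightarrow> ('s, 'a) hist pmf" where
  "hist_dist G \<sigma> \<tau> s k = ((\<lambda>D. bind_pmf D (game_step G \<sigma> \<tau>)) ^^ k) (return_pmf ([], s))"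

definition visits :: "('s, 'a) hist \<Rightarrow> 's set \<Rightarrow> bool" where
  "visits h X \<longleftrightarrow> (\<exists>p \<in> set (fst h). fst p \<in> X) \<or> snd h \<in> X"

text \<open>P^{sigma,tau}_s(Diamond X): the probability of eventually visiting X, obtained
  (by continuity of the path measure) as the limit/supremum of the probabilities of
  visiting X within the first k steps.\<close>
definition reach_prob ::
  "('s, 'a) sgame \<Rightarrow> (('s, 'a) hist \<Rightarrow> 'a pmf) \<Rightarrow> (('s, 'a) hist \<Rightarrow> 'a pmf)
     \<Rightarrow> 's \<Rightarrow> 's set \<Rightarrow> real" where
  "reach_prob G \<sigma> \<tau> s X = (SUP k. measure_pmf.prob (hist_dist G \<sigma> \<tau> s k) {h. visits h X})"

definition achievable ::
  "('s, 'a) sgame \<Rightarrow> ('n::finite \<Rightarrow> 's set) \<Rightarrow> 's \<Rightarrow> (real ^ 'n) set" where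
  "achievable G T s = {v. (\<forall>i. 0 \<le> v $ i) \<and>
      (\<exists>\<sigma>. max_strategy G \<sigma> \<and> (\<forall>\<tau>. min_strategy G \<tau> \<longrightarrow>
          (\<forall>i. reach_prob G \<sigma> \<tau> s (T i) \<ge> v $ i)))}"

definition dwc :: "(real ^ 'n::finite) set \<Rightarrow> (real ^ 'n) set" where
  "dwc X = {y. (\<forall>i. 0 \<le> y $ i) \<and> (\<exists>x\<in>X. y \<le> x)}"

definition one_box :: "(real ^ 'n::finite) set" where
  "one_box = dwc {1}"

definition unit_cube :: "(real ^ 'n::finite) set" where
  "unit_cube = {v. \<forall>i. 0 \<le> v $ i \<and> v $ i \<le> 1}"

definition mink_plus :: "(real ^ 'n::finite) set \<Rightarrow> (real ^ 'n) set \<Rightarrow> (real ^ 'n) set" where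
  "mink_plus X Y = {x + y | x y. x \<in> X \<and> y \<in> Y}"

definition dir :: "real ^ 'n::finite \<Rightarrow> (real ^ 'n) set" where
  "dir v = {l *\<^sub>R v | l. l > 0}"

definition Dirs :: "(real ^ 'n::finite) set set" where
  "Dirs = {dir v | v. v \<in> unit_cube \<and> v \<noteq> 0}"

text \<open>X[d] = sup of norms of points of X in direction d (sup of the empty set is 0).\<close>
definition in_dir :: "(real ^ 'n::finite) set \<Rightarrow> (real ^ 'n) set \<Rightarrow> real" where
  "in_dir X d = (let N = {norm x | x. x \<in> X \<and> dir x = d} in if N = {} then 0 else Sup N)"

text \<open>A region (set of directions) viewed as a set of points of [0,1]^n.\<close>
definition region_pts :: "(real ^ 'n::finite) set set \<Rightarrow> (real ^ 'n) set" where
  "region_pts R = {v \<in> unit_cube. dir v \<in> R}"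

definition ind_T :: "('n::finite \<Rightarrow> 's set) \<Rightarrow> 's \<Rightarrow> real ^ 'n" where
  "ind_T T s = (\<chi> i. if s \<in> T i then 1 else 0)"

definition succ_sum ::
  "('s::finite, 'a) sgame \<Rightarrow> ('s \<Rightarrow> (real ^ 'n::finite) set) \<Rightarrow> 's \<Rightarrow> 'a \<Rightarrow> (real ^ 'n) set" where
  "succ_sum G f s a = {(\<Sum>s'\<in>UNIV. pmf (delta G s a) s' *\<^sub>R x s') | x. \<forall>s'. x s' \<in> f s'}"

definition fsa ::
  "('s::finite, 'a) sgame \<Rightarrow> ('n::finite \<Rightarrow> 's set) \<Rightarrow> ('s \<Rightarrow> (real ^ 'n) set)
     \<Rightarrow> 's \<Rightarrow> 'a \<Rightarrow> (real ^ 'n) set" where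
  "fsa G T f s a = mink_plus (dwc {ind_T T s}) (succ_sum G f s a) \<inter> one_box"

definition is_EC :: "('s, 'a) sgame \<Rightarrow> 's set \<Rightarrow> ('s \<Rightarrow> 'a set) \<Rightarrow> 's set \<Rightarrow> bool" where
  "is_EC G Sr Avr C \<longleftrightarrow> C \<noteq> {} \<and> C \<subseteq> Sr \<and>
     (\<exists>B. B \<noteq> {} \<and> B \<subseteq> {(s, a). s \<in> C \<and> a \<in> Avr s} \<and>
        (\<forall>(s, a) \<in> B. set_pmf (delta G s a) \<subseteq> C) \<and>
        (\<forall>s\<in>C. \<forall>t\<in>C. (s, t) \<in> {(u, v). \<exists>a. (u, a) \<in> B \<and> v \<in> set_pmf (delta G u a)}\<^sup>*))"

definition MECs :: "('s, 'a) sgame \<Rightarrow> 's set \<Rightarrow> ('s \<Rightarrow> 'a set) \<Rightarrow> 's set set" where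
  "MECs G Sr Avr = {C. is_EC G Sr Avr C \<and> \<not> (\<exists>C'. is_EC G Sr Avr C' \<and> C \<subset> C')}"

definition exits :: "('s, 'a) sgame \<Rightarrow> 's set \<Rightarrow> ('s \<times> 'a) set" where
  "exits G C = {(s, a). s \<in> C \<and> a \<in> av G s \<and> \<not> set_pmf (delta G s a) \<subseteq> C}"

text \<open>Best exit exit[f](C); the union over an empty family of exits is {0}.\<close>
definition best_exit ::
  "('s::finite, 'a) sgame \<Rightarrow> ('n::finite \<Rightarrow> 's set) \<Rightarrow> ('s \<Rightarrow> (real ^ 'n) set)
     \<Rightarrow> 's set \<Rightarrow> (real ^ 'n) set" where
  "best_exit G T f C =
     (let E = {(s, a) \<in> exits G C. s \<in> smax G};
          X = (if E = {} then {0} else (\<Union>(s, a) \<in> E. fsa G T f s a))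
      in mink_plus (dwc {\<Sum>s\<in>C. ind_T T s}) (convex hull X) \<inter> one_box)"

definition argmin_acts ::
  "('s::finite, 'a) sgame \<Rightarrow> ('n::finite \<Rightarrow> 's set) \<Rightarrow> ('s \<Rightarrow> (real ^ 'n) set)
     \<Rightarrow> 's \<Rightarrow> (real ^ 'n) set \<Rightarrow> 'a set" where
  "argmin_acts G T L s d = {a \<in> av G s. \<forall>b \<in> av G s. in_dir (fsa G T L s a) d \<le> in_dir (fsa G T L s b) d}"

definition region_B ::
  "('s::finite, 'a) sgame \<Rightarrow> ('n::finite \<Rightarrow> 's set) \<Rightarrow> ('s \<Rightarrow> (real ^ 'n) set)
     \<Rightarrow> 's \<Rightarrow> 'a set \<Rightarrow> (real ^ 'n) set set" where
  "region_B G T L s B = {d \<in> Dirs. argmin_acts G T L s d = B}"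

text \<open>GET_REGIONS(C, L): the common refinement of {D} and, for every Minimizer state s in C,
  of the partition into the nonempty sets R_B; i.e. the nonempty intersections
  D \<inter> \<Inter>_{s} R_{B s}(s).\<close>
definition get_regions ::
  "('s::finite, 'a) sgame \<Rightarrow> ('n::finite \<Rightarrow> 's set) \<Rightarrow> 's set \<Rightarrow> ('s \<Rightarrow> (real ^ 'n) set)
     \<Rightarrow> (real ^ 'n) set set set" where
  "get_regions G T C L = {R. R \<noteq> {} \<and>
      (\<exists>B. R = {d \<in> Dirs. \<forall>s \<in> C \<inter> - smax G. d \<in> region_B G T L s (B s)})}"

definition find_SECs ::
  "('s::finite, 'a) sgame \<Rightarrow> ('n::finite \<Rightarrow> 's set) \<Rightarrow> 's set \<Rightarrow> ('s \<Rightarrow> (real ^ 'n) set)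
     \<Rightarrow> (real ^ 'n) set set \<Rightarrow> 's set set" where
  "find_SECs G T C L R =
     (let d = (SOME d. d \<in> R);
          Av' = (\<lambda>s. if s \<in> C \<inter> - smax G then argmin_acts G T L s d else av G s)
      in MECs G C Av')"

definition deflate_SECs ::
  "('s::finite, 'a) sgame \<Rightarrow> ('n::finite \<Rightarrow> 's set) \<Rightarrow> ('s \<Rightarrow> (real ^ 'n) set)
     \<Rightarrow> ('s \<Rightarrow> (real ^ 'n) set) \<Rightarrow> ('s \<Rightarrow> (real ^ 'n) set)" where
  "deflate_SECs G T L U s =
     (if \<exists>C \<in> MECs G UNIV (av G). s \<in> C then
        {0} \<union> (\<Union>C \<in> {C \<in> MECs G UNIV (av G). s \<in> C}.
                \<Union>R \<in> get_regions G T C L.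
                  (if \<exists>C' \<in> find_SECs G T C L R. s \<in> C'
                   then (\<Union>C' \<in> {C' \<in> find_SECs G T C L R. s \<in> C'}.
                           U s \<inter> best_exit G T U C' \<inter> region_pts R)
                   else U s \<inter> region_pts R))
      else U s)"

end

theory Submission
  imports Defs
begin

text \<open>
  Deflation only intersects \<open>U s\<close> with further sets and keeps \<open>0\<close>, which is achievable; this
  gives monotonicity. For soundness, let \<open>v\<close> be achieved by a Maximizer strategy \<open>\<sigma>\<close> from a state
  \<open>s\<close> of a MEC, and let \<open>C\<close> be a simple end component containing \<open>s\<close> that is found for the
  region of the direction of \<open>v\<close>. Every Minimizer state of \<open>C\<close> has an action keeping the play in
  \<open>C\<close>; Minimizer plays such actions until \<open>\<sigma>\<close> takes an exit of \<open>C\<close>, and afterwards answers the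
  residual strategy of \<open>\<sigma>\<close> \<open>\<epsilon>\<close>-optimally. Hence, for a target \<open>T i\<close> disjoint from \<open>C\<close>, \<open>v $ i\<close> is
  at most the \<open>i\<close>-th coordinate of a limit \<open>y\<close> of sub-convex combinations of exit points
  \<open>\<Sum>s'. \<delta>(s,a)(s') x(s')\<close> with \<open>x(s')\<close> achievable, hence in \<open>U s'\<close>. A supporting hyperplane
  argument puts \<open>y\<close> into the convex hull of the exit points and \<open>0\<close>; shrinking \<open>y\<close> to
  \<open>inf y v\<close> stays in that hull because achievable sets are downward closed. The targets meeting
  \<open>C\<close> are covered by the summand \<open>dwc {\<Sum>s\<in>C. 1\<^sub>T(s)}\<close> of the best exit.
\<close>

type_synonym ('s, 'a) strategy = "('s, 'a) hist \<Rightarrow> 'a pmf"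

definition residual :: "('s, 'a) strategy \<Rightarrow> ('s \<times> 'a) list \<Rightarrow> ('s, 'a) hist \<Rightarrow> 'a pmf" where
  "residual f p h = f (p @ fst h, snd h)"

definition prefix_hist :: "('s \<times> 'a) list \<Rightarrow> ('s, 'a) hist \<Rightarrow> ('s, 'a) hist" where
  "prefix_hist p h = (p @ fst h, snd h)"

abbreviation steps ::
  "('s, 'a) sgame \<Rightarrow> ('s, 'a) strategy \<Rightarrow> ('s, 'a) strategy \<Rightarrow> nat
     \<Rightarrow> ('s, 'a) hist pmf \<Rightarrow> ('s, 'a) hist pmf" where
  "steps G \<sigma> \<tau> m \<equiv> (\<lambda>D. bind_pmf D (game_step G \<sigma> \<tau>)) ^^ m"

lemma residual_residual [simp]: "residual (residual f p) q = residual f (p @ q)"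
  by (auto simp: residual_def fun_eq_iff)

lemma game_step_prefix_hist:
  "game_step G \<sigma> \<tau> (prefix_hist p h) =
   map_pmf (prefix_hist p) (game_step G (residual \<sigma> p) (residual \<tau> p) h)"
  by (simp add: game_step_def prefix_hist_def residual_def map_bind_pmf map_pmf_comp)

lemma steps_map_prefix_hist:
  "steps G \<sigma> \<tau> m (map_pmf (prefix_hist p) D) =
   map_pmf (prefix_hist p) (steps G (residual \<sigma> p) (residual \<tau> p) m D)"
  by (induction m) (simp_all add: bind_map_pmf game_step_prefix_hist map_bind_pmf)

lemma steps_bind_pmf: "steps G \<sigma> \<tau> m (bind_pmf A f) = bind_pmf A (\<lambda>x. steps G \<sigma> \<tau> m (f x))"
  by (induction m) (simp_all add: bind_assoc_pmf)

lemma hist_dist_Suc: "hist_dist G \<sigma> \<tau> s (Suc m) = bind_pmf (hist_dist G \<sigma> \<tau> s m) (game_step G \<sigma> \<tau>)"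
  by (simp add: hist_dist_def)

lemma hist_dist_Suc_first_step:
  "hist_dist G \<sigma> \<tau> s (Suc m) =
   bind_pmf (if s \<in> smax G then \<sigma> ([], s) else \<tau> ([], s)) (\<lambda>a. bind_pmf (delta G s a) (\<lambda>s'.
     map_pmf (prefix_hist [(s, a)]) (hist_dist G (residual \<sigma> [(s, a)]) (residual \<tau> [(s, a)]) s' m)))"
proof -
  have "hist_dist G \<sigma> \<tau> s (Suc m) = steps G \<sigma> \<tau> m (game_step G \<sigma> \<tau> ([], s))"
    unfolding hist_dist_def by (simp add: funpow_Suc_right bind_return_pmf del: funpow.simps)
  also have "game_step G \<sigma> \<tau> ([], s) = bind_pmf (if s \<in> smax G then \<sigma> ([], s) else \<tau> ([], s))
      (\<lambda>a. bind_pmf (delta G s a) (\<lambda>s'. map_pmf (prefix_hist [(s, a)]) (return_pmf ([], s'))))"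
    by (simp add: game_step_def prefix_hist_def map_pmf_def[of _ "delta G s _"] bind_return_pmf)
  finally show ?thesis
    unfolding steps_bind_pmf steps_map_prefix_hist hist_dist_def by simp
qed

definition reach_within ::
  "('s, 'a) sgame \<Rightarrow> ('s, 'a) strategy \<Rightarrow> ('s, 'a) strategy
     \<Rightarrow> 's \<Rightarrow> 's set \<Rightarrow> nat \<Rightarrow> real" where
  "reach_within G \<sigma> \<tau> s X m = measure_pmf.prob (hist_dist G \<sigma> \<tau> s m) {h. visits h X}"

lemma measure_pmf_bind_finite:
  fixes M :: "'x::finite pmf"
  shows "measure_pmf.prob (bind_pmf M f) A = (\<Sum>x\<in>UNIV. pmf M x * measure_pmf.prob (f x) A)"
proof -
  have "ennreal (measure_pmf.prob (bind_pmf M f) A) = emeasure (bind_pmf M f) A"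
    by (simp add: measure_pmf.emeasure_eq_measure)
  also have "\<dots> = (\<integral>\<^sup>+x. emeasure (f x) A \<partial>M)"
    by simp
  also have "\<dots> = (\<Sum>x\<in>UNIV. emeasure (f x) A * pmf M x)"
    by (rule nn_integral_measure_pmf_support) auto
  also have "\<dots> = ennreal (\<Sum>x\<in>UNIV. pmf M x * measure_pmf.prob (f x) A)"
    by (simp add: measure_pmf.emeasure_eq_measure ennreal_mult sum_ennreal[symmetric] mult.commute)
  finally show ?thesis by (simp add: sum_nonneg)
qed

abbreviation pmf_mix :: "'x::finite pmf \<Rightarrow> ('x \<Rightarrow> 'v::real_vector) \<Rightarrow> 'v" where
  "pmf_mix p x \<equiv> \<Sum>y\<in>UNIV. pmf p y *\<^sub>R x y"

lemma sum_pmf_UNIV: "(\<Sum>x\<in>(UNIV::'x::finite set). pmf p x) = 1"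
  by (rule sum_pmf_eq_1) auto

lemma sum_pmf_mult_le_plus:
  fixes p :: "'x::finite pmf"
  assumes "\<And>x. x \<in> set_pmf p \<Longrightarrow> f x \<le> g x + \<epsilon>"
  shows "(\<Sum>x\<in>UNIV. pmf p x * f x) \<le> (\<Sum>x\<in>UNIV. pmf p x * g x) + \<epsilon>"
proof -
  have "pmf p x * f x \<le> pmf p x * (g x + \<epsilon>)" for x
    using assms[of x] by (cases "x \<in> set_pmf p") (auto simp: set_pmf_iff mult_left_mono)
  then have "(\<Sum>x\<in>UNIV. pmf p x * f x) \<le> (\<Sum>x\<in>UNIV. pmf p x * (g x + \<epsilon>))"
    by (intro sum_mono)
  also have "\<dots> = (\<Sum>x\<in>UNIV. pmf p x * g x) + \<epsilon>"
    by (simp add: algebra_simps sum.distrib sum_distrib_left[symmetric] sum_pmf_UNIV)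
  finally show ?thesis .
qed

lemma visits_prefix_hist: "visits (prefix_hist [(s, a)] h) X \<longleftrightarrow> s \<in> X \<or> visits h X"
  by (auto simp: visits_def prefix_hist_def)

lemma reach_within_0: "reach_within G \<sigma> \<tau> s X 0 = (if s \<in> X then 1 else 0)"
  by (simp add: reach_within_def hist_dist_def visits_def)

lemma reach_within_Suc:
  fixes G :: "('s::finite, 'a::finite) sgame"
  shows "reach_within G \<sigma> \<tau> s X (Suc m) = (if s \<in> X then 1 else
     (\<Sum>a\<in>UNIV. pmf (if s \<in> smax G then \<sigma> ([], s) else \<tau> ([], s)) a *
        (\<Sum>s'\<in>UNIV. pmf (delta G s a) s' *
           reach_within G (residual \<sigma> [(s, a)]) (residual \<tau> [(s, a)]) s' X m)))"
proof (cases "s \<in> X")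
  case True
  then have "set_pmf (hist_dist G \<sigma> \<tau> s (Suc m)) \<subseteq> {h. visits h X}"
    by (auto simp: hist_dist_Suc_first_step visits_prefix_hist)
  then show ?thesis
    using True by (simp add: reach_within_def measure_pmf.prob_eq_1 AE_measure_pmf_iff subset_eq)
next
  case False
  then show ?thesis
    unfolding reach_within_def hist_dist_Suc_first_step
    by (simp add: measure_pmf_bind_finite vimage_def visits_prefix_hist)
qed

lemma reach_prob_eq_SUP: "reach_prob G \<sigma> \<tau> s X = (SUP m. reach_within G \<sigma> \<tau> s X m)"
  by (simp add: reach_prob_def reach_within_def)

lemma reach_within_le_reach_prob: "reach_within G \<sigma> \<tau> s X m \<le> reach_prob G \<sigma> \<tau> s X"
  unfolding reach_prob_eq_SUP
  by (rule cSUP_upper) (auto intro!: bdd_aboveI[of _ 1] simp: reach_within_def)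

lemma reach_prob_le: "(\<And>m. reach_within G \<sigma> \<tau> s X m \<le> c) \<Longrightarrow> reach_prob G \<sigma> \<tau> s X \<le> c"
  unfolding reach_prob_eq_SUP by (rule cSUP_least) auto

lemma reach_prob_nonneg: "0 \<le> reach_prob G \<sigma> \<tau> s X"
  using reach_within_le_reach_prob[of G \<sigma> \<tau> s X 0]
  by (simp add: reach_within_def order_trans[OF measure_nonneg])

lemma reach_prob_le_1: "reach_prob G \<sigma> \<tau> s X \<le> 1"
  by (rule reach_prob_le) (simp add: reach_within_def)

definition hist_start :: "('s, 'a) hist \<Rightarrow> 's" where
  "hist_start h = (case fst h of [] \<Rightarrow> snd h | p # _ \<Rightarrow> fst p)"

lemma hist_start_game_step: "h' \<in> set_pmf (game_step G \<sigma> \<tau> h) \<Longrightarrow> hist_start h' = hist_start h"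
  by (auto simp: game_step_def hist_start_def split: list.splits)

lemma hist_start_hist_dist: "h \<in> set_pmf (hist_dist G \<sigma> \<tau> s m) \<Longrightarrow> hist_start h = s"
proof (induction m arbitrary: h)
  case 0
  then show ?case by (simp add: hist_dist_def hist_start_def)
next
  case (Suc m)
  then show ?case
    unfolding hist_dist_Suc by (auto dest: hist_start_game_step)
qed

lemma reach_prob_cong_start:
  assumes "\<And>h. hist_start h = s \<Longrightarrow> \<tau>1 h = \<tau>2 h"
  shows "reach_prob G \<sigma> \<tau>1 s X = reach_prob G \<sigma> \<tau>2 s X"
proof -
  have "hist_dist G \<sigma> \<tau>1 s m = hist_dist G \<sigma> \<tau>2 s m" for m
  proof (induction m)
    case 0
    then show ?case by (simp add: hist_dist_def)
  next
    case (Suc m)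
    show ?case
      unfolding hist_dist_Suc Suc
      by (rule bind_pmf_cong) (auto simp: game_step_def assms hist_start_hist_dist)
  qed
  then show ?thesis by (simp add: reach_prob_def)
qed

section \<open>Limits of growing sub-convex combinations\<close>

definition mass :: "(real \<times> 'v) multiset \<Rightarrow> real" where
  "mass E = sum_mset (image_mset fst E)"

definition wsum :: "(real \<times> 'v::real_vector) multiset \<Rightarrow> 'v" where
  "wsum E = sum_mset (image_mset (\<lambda>(w, g). w *\<^sub>R g) E)"

lemma mass_simps [simp]:
  "mass {#} = 0" "mass (add_mset x E) = fst x + mass E" "mass (E + F) = mass E + mass F"
  by (simp_all add: mass_def)

lemma wsum_simps [simp]:
  "wsum {#} = 0" "wsum (add_mset (w, g) E) = w *\<^sub>R g + wsum E" "wsum (E + F) = wsum E + wsum F"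
  by (simp_all add: wsum_def)

definition scale_weight :: "real \<Rightarrow> real \<times> 'v \<Rightarrow> real \<times> 'v" where
  "scale_weight c = (\<lambda>(w, g). (c * w, g))"

lemma mass_scale_weight: "mass (image_mset (scale_weight c) E) = c * mass E"
  by (induction E) (auto simp: scale_weight_def algebra_simps)

lemma wsum_scale_weight: "wsum (image_mset (scale_weight c) E) = c *\<^sub>R wsum E"
  by (induction E) (auto simp: scale_weight_def scaleR_add_right)

lemma mass_sum: "finite A \<Longrightarrow> mass (\<Sum>x\<in>A. M x) = (\<Sum>x\<in>A. mass (M x))"
  by (induction A rule: finite_induct) auto

lemma wsum_sum: "finite A \<Longrightarrow> wsum (\<Sum>x\<in>A. M x) = (\<Sum>x\<in>A. wsum (M x))"
  by (induction A rule: finite_induct) auto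

lemma wsum_component: "wsum E $ j = sum_mset (image_mset (\<lambda>(w, g). w * g $ j) E)"
  by (induction E) auto

lemma sum_mset_family_mono:
  "finite A \<Longrightarrow> (\<And>x. x \<in> A \<Longrightarrow> M x \<subseteq># N x) \<Longrightarrow> (\<Sum>x\<in>A. M x) \<subseteq># (\<Sum>x\<in>A. N x)"
  by (induction A rule: finite_induct) (auto intro: subset_mset.add_mono)

lemma sum_mset_image_mono_subset:
  fixes f :: "'x \<Rightarrow> real"
  assumes "M \<subseteq># N" "\<And>x. x \<in># N \<Longrightarrow> 0 \<le> f x"
  shows "sum_mset (image_mset f M) \<le> sum_mset (image_mset f N)"
proof -
  obtain D where N: "N = M + D"
    using assms(1) by (auto simp: subset_mset.le_iff_add)
  have "sum_mset (image_mset (\<lambda>_. 0) D) \<le> sum_mset (image_mset f D)"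
    using assms(2) N by (intro sum_mset_mono) auto
  then show ?thesis using N by simp
qed

lemma le_sum_mset_image:
  fixes f :: "'x \<Rightarrow> real"
  assumes "x \<in># N" "\<And>x. x \<in># N \<Longrightarrow> 0 \<le> f x"
  shows "f x \<le> sum_mset (image_mset f N)"
  using sum_mset_image_mono_subset[of "{#x#}" N f] assms by simp

lemma wsum_component_mono:
  fixes E F :: "(real \<times> (real ^ 'n::finite)) multiset"
  assumes "E \<subseteq># F" "\<And>w g. (w, g) \<in># F \<Longrightarrow> 0 \<le> w \<and> 0 \<le> g $ j"
  shows "wsum E $ j \<le> wsum F $ j"
  unfolding wsum_component using assms by (intro sum_mset_image_mono_subset) auto

lemma wsum_component_le_mass:
  fixes E :: "(real \<times> (real ^ 'n::finite)) multiset"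
  assumes "\<And>w g. (w, g) \<in># E \<Longrightarrow> 0 \<le> w \<and> g $ j \<le> 1"
  shows "wsum E $ j \<le> mass E"
proof -
  have "(\<lambda>(w, g). w * g $ j) x \<le> fst x" if "x \<in># E" for x
    using assms[of "fst x" "snd x"] that by (cases x) (auto intro: mult_left_le)
  then show ?thesis
    unfolding wsum_component mass_def by (rule sum_mset_mono)
qed

lemma mass_nonneg: "(\<And>w g. (w, g) \<in># E \<Longrightarrow> 0 \<le> w) \<Longrightarrow> 0 \<le> mass E"
  unfolding mass_def using sum_mset_mono[of E "\<lambda>_. 0" fst] by fastforce

lemma wsum_eq_0_if_mass_eq_0:
  assumes "\<And>w g. (w, g) \<in># E \<Longrightarrow> 0 \<le> w" "mass E = 0"
  shows "wsum E = 0"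
  using assms
proof (induction E)
  case (add x E)
  obtain w g where x: "x = (w, g)" by fastforce
  have "0 \<le> mass E" "0 \<le> w"
    using add.prems x by (auto intro: mass_nonneg)
  then have "w = 0" "mass E = 0"
    using add.prems(2) x by auto
  then show ?case using add x by auto
qed simp

lemma mass_posE:
  assumes "\<And>w g. (w, g) \<in># E \<Longrightarrow> 0 \<le> w" "0 < mass E"
  obtains w g where "(w, g) \<in># E" "0 < w"
proof -
  have "\<not> (\<forall>x\<in>#E. fst x \<le> 0)"
  proof
    assume "\<forall>x\<in>#E. fst x \<le> 0"
    then have "mass E \<le> sum_mset (image_mset (\<lambda>_. 0) E)"
      unfolding mass_def by (intro sum_mset_mono) auto
    then show False using assms(2) by simp
  qed
  then show ?thesis using that by force
qed

lemma normalized_wsum_in_convex: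
  assumes "convex K" "\<And>w g. (w, g) \<in># E \<Longrightarrow> 0 \<le> w \<and> (0 < w \<longrightarrow> g \<in> K)" "0 < mass E"
  shows "(1 / mass E) *\<^sub>R wsum E \<in> K"
  using assms(2,3)
proof (induction E)
  case (add x E)
  obtain w g where x: "x = (w, g)" by fastforce
  have mass_E: "0 \<le> mass E" and w: "0 \<le> w"
    using add.prems(1) x by (force intro: mass_nonneg)+
  show ?case
  proof (cases "mass E = 0")
    case True
    then have "wsum E = 0" using add.prems(1) by (intro wsum_eq_0_if_mass_eq_0) force
    then show ?thesis using add.prems x True by auto
  next
    case False
    then have IH: "(1 / mass E) *\<^sub>R wsum E \<in> K" using add mass_E by force
    show ?thesis
    proof (cases "w = 0")
      case True
      then show ?thesis using IH x by simp
    next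
      case False
      then have "g \<in> K" using add.prems(1)[of w g] x w by auto
      from convexD[OF assms(1) this IH, of "w / (w + mass E)" "mass E / (w + mass E)"]
      have "(w / (w + mass E)) *\<^sub>R g + (mass E / (w + mass E)) *\<^sub>R ((1 / mass E) *\<^sub>R wsum E) \<in> K"
        using w mass_E False by (simp add: add_divide_distrib[symmetric])
      then show ?thesis
        using x \<open>mass E \<noteq> 0\<close> by (simp add: scaleR_add_right divide_simps)
    qed
  qed
qed simp

lemma wsum_in_convex:
  assumes "convex K" "0 \<in> K" "\<And>w g. (w, g) \<in># E \<Longrightarrow> 0 \<le> w \<and> (0 < w \<longrightarrow> g \<in> K)"
    and "mass E \<le> 1"
  shows "wsum E \<in> K"
proof (cases "mass E = 0")
  case True
  then have "wsum E = 0" using assms(3) by (intro wsum_eq_0_if_mass_eq_0) auto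
  then show ?thesis using assms(2) by simp
next
  case False
  have "0 \<le> mass E" using assms(3) by (intro mass_nonneg) auto
  then have pos: "0 < mass E" using False by simp
  from convexD[OF assms(1) normalized_wsum_in_convex[OF assms(1,3) pos] assms(2),
      of "mass E" "1 - mass E"]
  show ?thesis using pos assms(4) by simp
qed

lemma sum_mset_weighted_gap:
  "sum_mset (image_mset (\<lambda>(w, g). w * (a \<bullet> g - c)) E) = a \<bullet> wsum E - mass E * c"
  by (induction E) (auto simp: algebra_simps inner_add_right)

lemma mem_convex_hull_if_supporting_hyperplanes_contain:
  fixes y :: "'v::euclidean_space"
  assumes "Q \<noteq> {}" "y \<in> closure (convex hull Q)"
    and "\<And>a q. \<forall>q'\<in>Q. a \<bullet> y \<le> a \<bullet> q' \<Longrightarrow> q \<in> Q \<Longrightarrow> a \<bullet> q = a \<bullet> y"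
  shows "y \<in> convex hull Q"
proof (rule ccontr)
  assume "y \<notin> convex hull Q"
  then have "y \<notin> rel_interior (convex hull Q)" using rel_interior_subset by blast
  then obtain a where
    below: "\<And>z. z \<in> closure (convex hull Q) \<Longrightarrow> a \<bullet> y \<le> a \<bullet> z" and
    strict: "\<And>z. z \<in> rel_interior (convex hull Q) \<Longrightarrow> a \<bullet> y < a \<bullet> z"
    using supporting_hyperplane_relative_frontier[OF convex_convex_hull assms(2)] by metis
  have "\<forall>q'\<in>Q. a \<bullet> y \<le> a \<bullet> q'"
    using below closure_subset hull_inc by (metis subsetD)
  then have "Q \<subseteq> {z. a \<bullet> z = a \<bullet> y}"
    using assms(3) by blast
  then have on_hyperplane: "convex hull Q \<subseteq> {z. a \<bullet> z = a \<bullet> y}"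
    by (intro hull_minimal convex_hyperplane)
  obtain z where z: "z \<in> rel_interior (convex hull Q)"
    using rel_interior_eq_empty[OF convex_convex_hull, of Q] assms(1)
    by (metis convex_hull_eq_empty equals0I)
  then have "a \<bullet> y < a \<bullet> z" by (rule strict)
  moreover have "z \<in> convex hull Q" using z rel_interior_subset by blast
  ultimately show False using on_hyperplane by auto
qed

locale growing_subconvex_family =
  fixes E :: "nat \<Rightarrow> (real \<times> 'v::euclidean_space) multiset"
  assumes grows: "\<And>m. E m \<subseteq># E (Suc m)"
    and weight_nonneg: "\<And>m w g. (w, g) \<in># E m \<Longrightarrow> 0 \<le> w"
    and mass_le_1: "\<And>m. mass (E m) \<le> 1"
begin

definition total_mass :: real where
  "total_mass = (SUP m. mass (E m))"

text \<open>The point 0 carries the mass \<open>1 - total_mass\<close> that is never assigned.\<close>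

definition support :: "'v set" where
  "support = {g. \<exists>m w. (w, g) \<in># E m \<and> 0 < w} \<union> (if total_mass < 1 then {0} else {})"

lemma mass_tendsto: "(\<lambda>m. mass (E m)) \<longlonglongrightarrow> total_mass"
proof -
  have "incseq (\<lambda>m. mass (E m))"
    unfolding incseq_Suc_iff mass_def
    using grows weight_nonneg by (intro allI sum_mset_image_mono_subset) force+
  then show ?thesis
    unfolding total_mass_def using mass_le_1 by (intro LIMSEQ_incseq_SUP bdd_aboveI) auto
qed

lemma total_mass_le_1: "total_mass \<le> 1"
  unfolding total_mass_def using mass_le_1 by (intro cSUP_least) auto

lemma eventually_mass_pos: "total_mass = 1 \<Longrightarrow> eventually (\<lambda>m. 0 < mass (E m)) sequentially"
  using mass_tendsto by (intro order_tendstoD) auto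

lemma support_nonempty: "support \<noteq> {}"
proof (cases "total_mass < 1")
  case False
  then have "total_mass = 1" using total_mass_le_1 by simp
  then obtain m where "0 < mass (E m)"
    using eventually_mass_pos unfolding eventually_sequentially by blast
  then obtain w g where "(w, g) \<in># E m" "0 < w"
    using mass_posE[of "E m"] weight_nonneg by blast
  then show ?thesis unfolding support_def by blast
qed (simp add: support_def)

lemma lim_in_closure:
  assumes lim: "(\<lambda>m. wsum (E m)) \<longlonglongrightarrow> y"
  shows "y \<in> closure (convex hull support)"
proof (cases "total_mass < 1")
  case True
  have "wsum (E m) \<in> convex hull support" for m
    using weight_nonneg mass_le_1 True
    by (intro wsum_in_convex) (auto simp: support_def intro: hull_inc)
  then have "eventually (\<lambda>m. wsum (E m) \<in> closure (convex hull support)) sequentially"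
    using closure_subset by (intro always_eventually) blast
  then show ?thesis
    by (rule Lim_in_closed_set[OF closed_closure _ _ lim]) simp
next
  case False
  then have "total_mass = 1" using total_mass_le_1 by simp
  have "(\<lambda>m. (1 / mass (E m)) *\<^sub>R wsum (E m)) \<longlonglongrightarrow> (1 / total_mass) *\<^sub>R y"
    using \<open>total_mass = 1\<close> by (intro tendsto_intros mass_tendsto lim) simp
  then have "(\<lambda>m. (1 / mass (E m)) *\<^sub>R wsum (E m)) \<longlonglongrightarrow> y"
    using \<open>total_mass = 1\<close> by simp
  moreover have "eventually (\<lambda>m. (1 / mass (E m)) *\<^sub>R wsum (E m) \<in> closure (convex hull support))
      sequentially"
    using eventually_mass_pos[OF \<open>total_mass = 1\<close>]
  proof eventually_elim
    case (elim m)
    have "(1 / mass (E m)) *\<^sub>R wsum (E m) \<in> convex hull support"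
      using weight_nonneg by (intro normalized_wsum_in_convex elim) (auto simp: support_def intro: hull_inc)
    then show ?case using closure_subset by blast
  qed
  ultimately show ?thesis
    by (intro Lim_in_closed_set[OF closed_closure]) simp_all
qed

definition gap :: "'v \<Rightarrow> 'v \<Rightarrow> nat \<Rightarrow> real" where
  "gap a y m = sum_mset (image_mset (\<lambda>(w, g). w * (a \<bullet> g - a \<bullet> y)) (E m))"

lemma gap_term_nonneg:
  assumes "\<forall>q\<in>support. a \<bullet> y \<le> a \<bullet> q" "(w, g) \<in># E m"
  shows "0 \<le> w * (a \<bullet> g - a \<bullet> y)"
proof (cases "w = 0")
  case False
  then have "g \<in> support"
    using weight_nonneg[OF assms(2)] assms(2) by (force simp: support_def)
  then show ?thesis using weight_nonneg[OF assms(2)] assms(1) by simp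
qed simp

text \<open>If \<open>a\<close> supports \<open>support\<close> at \<open>y\<close>, every atom contributes nonnegatively to the gap,
  while the gap increases to \<open>(1 - total_mass) * (a \<bullet> y) \<le> 0\<close>; so all of it vanishes.\<close>

lemma gap_vanishes:
  assumes lim: "(\<lambda>m. wsum (E m)) \<longlonglongrightarrow> y" and below: "\<forall>q\<in>support. a \<bullet> y \<le> a \<bullet> q"
  shows "gap a y m = 0" and "(1 - total_mass) * (a \<bullet> y) = 0"
proof -
  have inc: "incseq (gap a y)"
    unfolding incseq_Suc_iff gap_def
    by (intro allI sum_mset_image_mono_subset grows) (use gap_term_nonneg[OF below] in fast)
  have "(\<lambda>m. a \<bullet> wsum (E m) - mass (E m) * (a \<bullet> y)) \<longlonglongrightarrow> a \<bullet> y - total_mass * (a \<bullet> y)"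
    by (intro tendsto_intros lim mass_tendsto)
  then have gap_lim: "gap a y \<longlonglongrightarrow> (1 - total_mass) * (a \<bullet> y)"
    unfolding gap_def sum_mset_weighted_gap by (simp add: algebra_simps)
  have lim_nonpos: "(1 - total_mass) * (a \<bullet> y) \<le> 0"
  proof (cases "total_mass < 1")
    case True
    then have "a \<bullet> y \<le> 0" using below by (simp add: support_def)
    then show ?thesis using True by (simp add: mult_nonneg_nonpos)
  qed (use total_mass_le_1 in simp)
  have "sum_mset (image_mset (\<lambda>_. 0) (E m)) \<le> gap a y m" for m
    unfolding gap_def by (intro sum_mset_mono) (auto intro: gap_term_nonneg[OF below])
  then have "0 \<le> gap a y m" for m by simp
  then show "gap a y m = 0" and "(1 - total_mass) * (a \<bullet> y) = 0"
    using incseq_le[OF inc gap_lim] lim_nonpos by (meson order.antisym order.trans)+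
qed

lemma support_on_supporting_hyperplane:
  assumes lim: "(\<lambda>m. wsum (E m)) \<longlonglongrightarrow> y"
    and below: "\<forall>q'\<in>support. a \<bullet> y \<le> a \<bullet> q'" and q: "q \<in> support"
  shows "a \<bullet> q = a \<bullet> y"
proof (cases "q = 0 \<and> total_mass < 1")
  case True
  then show ?thesis using gap_vanishes(2)[OF lim below] by simp
next
  case False
  then obtain m w where mw: "(w, q) \<in># E m" "0 < w"
    using q by (auto simp: support_def split: if_splits)
  have "w * (a \<bullet> q - a \<bullet> y) \<le> gap a y m"
    unfolding gap_def
    by (rule le_sum_mset_image[OF mw(1), where f="\<lambda>(w, g). w * (a \<bullet> g - a \<bullet> y)", simplified])
      (auto intro: gap_term_nonneg[OF below])
  then have "a \<bullet> q \<le> a \<bullet> y"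
    using gap_vanishes(1)[OF lim below] mw(2) by (simp add: mult_le_0_iff)
  then show ?thesis
    using below q by (simp add: order.antisym)
qed

lemma lim_in_convex_hull:
  assumes "(\<lambda>m. wsum (E m)) \<longlonglongrightarrow> y"
  shows "y \<in> convex hull support"
  using support_nonempty lim_in_closure[OF assms] support_on_supporting_hyperplane[OF assms]
  by (rule mem_convex_hull_if_supporting_hyperplanes_contain)

end

lemma lim_wsum_in_convex:
  fixes E :: "nat \<Rightarrow> (real \<times> 'v::euclidean_space) multiset"
  assumes K: "convex K" "0 \<in> K"
    and grows: "\<And>m. E m \<subseteq># E (Suc m)"
    and weights: "\<And>m w g. (w, g) \<in># E m \<Longrightarrow> 0 \<le> w \<and> g \<in> K"
    and mass: "\<And>m. mass (E m) \<le> 1"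
    and lim: "(\<lambda>m. wsum (E m)) \<longlonglongrightarrow> y"
  shows "y \<in> K"
proof -
  interpret growing_subconvex_family E
    using grows weights mass by unfold_locales auto
  have "support \<subseteq> K"
    using weights K(2) by (auto simp: support_def)
  then show ?thesis
    using lim_in_convex_hull[OF lim] hull_minimal K(1) by blast
qed

definition default_strategy :: "('s, 'a) sgame \<Rightarrow> ('s, 'a) hist \<Rightarrow> 'a pmf" where
  "default_strategy G h = return_pmf (SOME a. a \<in> av G (snd h))"

lemma default_strategy_is_strategy: "wf_game G \<Longrightarrow> is_strategy G P (default_strategy G)"
  unfolding is_strategy_def default_strategy_def wf_game_def by (auto simp: some_in_eq)

lemma max_strategy_residual: "max_strategy G \<sigma> \<Longrightarrow> max_strategy G (residual \<sigma> p)"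
  by (auto simp: max_strategy_def is_strategy_def residual_def)

definition guaranteed ::
  "('s, 'a) sgame \<Rightarrow> ('n::finite \<Rightarrow> 's set) \<Rightarrow> ('s, 'a) strategy \<Rightarrow> 's \<Rightarrow> real ^ 'n" where
  "guaranteed G T \<sigma> s = (\<chi> j. INF \<tau> \<in> {\<tau>. min_strategy G \<tau>}. reach_prob G \<sigma> \<tau> s (T j))"

lemma min_strategies_nonempty: "wf_game G \<Longrightarrow> {\<tau>. min_strategy G \<tau>} \<noteq> {}"
  using default_strategy_is_strategy[of G "- smax G"] by (auto simp: min_strategy_def)

lemma bdd_below_reach_prob: "bdd_below ((\<lambda>\<tau>. reach_prob G \<sigma> \<tau> s X) ` A)"
  by (rule bdd_belowI[of _ 0]) (auto simp: reach_prob_nonneg)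

lemma guaranteed_le_reach_prob:
  "min_strategy G \<tau> \<Longrightarrow> guaranteed G T \<sigma> s $ j \<le> reach_prob G \<sigma> \<tau> s (T j)"
  unfolding guaranteed_def by (auto intro!: cINF_lower bdd_below_reach_prob)

lemma guaranteed_nonneg: "wf_game G \<Longrightarrow> 0 \<le> guaranteed G T \<sigma> s $ j"
  unfolding guaranteed_def
  using min_strategies_nonempty by (auto intro!: cINF_greatest simp: reach_prob_nonneg)

lemma guaranteed_approx:
  assumes "wf_game G" "0 < \<epsilon>"
  shows "\<exists>\<tau>. min_strategy G \<tau> \<and> reach_prob G \<sigma> \<tau> s (T j) \<le> guaranteed G T \<sigma> s $ j + \<epsilon>"
proof -
  have "(INF \<tau> \<in> {\<tau>. min_strategy G \<tau>}. reach_prob G \<sigma> \<tau> s (T j)) < guaranteed G T \<sigma> s $ j + \<epsilon>"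
    using assms(2) by (simp add: guaranteed_def)
  then obtain \<tau> where "min_strategy G \<tau>" "reach_prob G \<sigma> \<tau> s (T j) < guaranteed G T \<sigma> s $ j + \<epsilon>"
    using cINF_less_iff[OF min_strategies_nonempty[OF assms(1)] bdd_below_reach_prob] by auto
  then show ?thesis by (auto intro!: exI[of _ \<tau>])
qed

lemma guaranteed_achievable:
  "wf_game G \<Longrightarrow> max_strategy G \<sigma> \<Longrightarrow> guaranteed G T \<sigma> s \<in> achievable G T s"
  unfolding achievable_def
  by (auto intro!: exI[of _ \<sigma>] guaranteed_nonneg guaranteed_le_reach_prob)

lemma achievable_downward_closed:
  assumes "v \<in> achievable G T s" "0 \<le> v'" "v' \<le> v"
  shows "v' \<in> achievable G T s"
proof -
  obtain \<sigma> where "max_strategy G \<sigma>" "\<And>\<tau> i. min_strategy G \<tau> \<Longrightarrow> v $ i \<le> reach_prob G \<sigma> \<tau> s (T i)"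
    using assms(1) unfolding achievable_def by blast
  moreover have "0 \<le> v' $ i" "v' $ i \<le> v $ i" for i
    using assms(2,3) by (simp_all add: less_eq_vec_def)
  ultimately show ?thesis
    unfolding achievable_def using order_trans by blast
qed

lemma achievable_subset_unit_cube: "wf_game G \<Longrightarrow> achievable G T s \<subseteq> unit_cube"
proof
  fix v assume wf: "wf_game G" and "v \<in> achievable G T s"
  then obtain \<sigma> where \<sigma>: "\<And>\<tau> i. min_strategy G \<tau> \<Longrightarrow> v $ i \<le> reach_prob G \<sigma> \<tau> s (T i)"
    and nonneg: "\<And>i. 0 \<le> v $ i"
    unfolding achievable_def by blast
  have "min_strategy G (default_strategy G)"
    using default_strategy_is_strategy[OF wf] by (simp add: min_strategy_def)
  then have "v $ i \<le> 1" for i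
    using \<sigma> reach_prob_le_1 order_trans by metis
  then show "v \<in> unit_cube"
    using nonneg by (simp add: unit_cube_def)
qed

lemma zero_achievable: "wf_game G \<Longrightarrow> 0 \<in> achievable G T s"
  unfolding achievable_def using default_strategy_is_strategy[of G "smax G"]
  by (auto simp: max_strategy_def reach_prob_nonneg intro!: exI[of _ "default_strategy G"])

lemma pmf_mix_in_unit_cube:
  fixes x :: "'x::finite \<Rightarrow> real ^ 'n::finite"
  assumes "\<And>y. x y \<in> unit_cube"
  shows "pmf_mix p x \<in> unit_cube"
proof -
  have bounds: "0 \<le> x y $ j" "x y $ j \<le> 1" for y j
    using assms by (auto simp: unit_cube_def)
  have "(\<Sum>y\<in>UNIV. pmf p y * x y $ j) \<le> (\<Sum>y\<in>UNIV. pmf p y)" for j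
    using bounds by (intro sum_mono mult_right_le_one_le) auto
  then show ?thesis
    using bounds by (auto simp: unit_cube_def sum_pmf_UNIV intro!: sum_nonneg)
qed

lemma pmf_mix_in_fsa:
  assumes "\<And>s'. x s' \<in> f s'" "\<And>s'. x s' \<in> unit_cube"
  shows "pmf_mix (delta G s a) x \<in> fsa G T f s a"
proof -
  have "0 \<in> dwc {ind_T T s}"
    by (auto simp: dwc_def ind_T_def less_eq_vec_def)
  moreover have "pmf_mix (delta G s a) x \<in> succ_sum G f s a"
    unfolding succ_sum_def using assms(1) by blast
  moreover have "pmf_mix (delta G s a) x \<in> unit_cube"
    by (rule pmf_mix_in_unit_cube[OF assms(2)])
  then have "pmf_mix (delta G s a) x \<in> one_box"
    by (auto simp: one_box_def dwc_def unit_cube_def less_eq_vec_def)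
  ultimately show ?thesis
    unfolding fsa_def mink_plus_def by force
qed

definition exit_choices ::
  "('s::finite, 'a) sgame \<Rightarrow> ('n::finite \<Rightarrow> 's set) \<Rightarrow> ('s \<Rightarrow> (real ^ 'n) set)
     \<Rightarrow> 's set \<Rightarrow> (real ^ 'n) set" where
  "exit_choices G T f C =
     (let E = {(s, a) \<in> exits G C. s \<in> smax G}
      in if E = {} then {0} else (\<Union>(s, a) \<in> E. fsa G T f s a))"

lemma exit_choicesI:
  "(s, a) \<in> exits G C \<Longrightarrow> s \<in> smax G \<Longrightarrow> z \<in> fsa G T f s a \<Longrightarrow> z \<in> exit_choices G T f C"
  by (auto simp: exit_choices_def Let_def)

lemma zero_mem_exit_choices:
  assumes "\<And>s'. 0 \<in> f s'"
  shows "0 \<in> exit_choices G T f C"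
proof -
  have "0 \<in> fsa G T f s a" for s a
    using pmf_mix_in_fsa[of "\<lambda>_. 0" f] assms by (simp add: unit_cube_def)
  then show ?thesis
    unfolding exit_choices_def Let_def by simp
qed

lemma best_exit_memI:
  fixes C :: "'s::finite set"
  assumes "v \<in> unit_cube" "b \<in> convex hull exit_choices G T f C" "0 \<le> b" "b \<le> v"
    and "\<And>j. T j \<inter> C = {} \<Longrightarrow> b $ j = v $ j"
  shows "v \<in> best_exit G T f C"
proof -
  define ind where "ind = (\<Sum>s\<in>C. ind_T T s)"
  have "(v - b) $ j \<le> ind $ j" for j
  proof (cases "T j \<inter> C = {}")
    case True
    then show ?thesis
      using assms(5) by (auto simp: ind_def ind_T_def intro!: sum_nonneg)
  next
    case False
    then obtain s where "s \<in> T j" "s \<in> C" by blast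
    then have "1 \<le> ind $ j"
      unfolding ind_def sum_component
      using member_le_sum[of s C "\<lambda>s. ind_T T s $ j"] by (auto simp: ind_T_def)
    moreover have "v $ j \<le> 1" "0 \<le> b $ j"
      using assms(1,3) by (auto simp: unit_cube_def less_eq_vec_def)
    ultimately show ?thesis by simp
  qed
  then have "v - b \<in> dwc {ind}"
    using assms(4) by (auto simp: dwc_def less_eq_vec_def)
  moreover have "v \<in> one_box"
    using assms(1) by (auto simp: one_box_def dwc_def unit_cube_def less_eq_vec_def)
  moreover have "v = (v - b) + b" by simp
  ultimately show ?thesis
    using assms(2) unfolding best_exit_def exit_choices_def Let_def mink_plus_def ind_def
    by blast
qed

lemma convex_hull_closed_under_scaling:
  fixes P :: "(real ^ 'n::finite) set"
  assumes "\<And>z. z \<in> P \<Longrightarrow> d * z \<in> P" "z \<in> convex hull P"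
  shows "d * z \<in> convex hull P"
proof -
  have "linear ((*) d)"
    by (auto simp: linear_iff times_vec_def vec_eq_iff algebra_simps)
  then have "(*) d ` (convex hull P) = convex hull ((*) d ` P)"
    by (rule convex_hull_linear_image)
  also have "\<dots> \<subseteq> convex hull P"
    using assms(1) by (intro hull_mono) auto
  finally show ?thesis using assms(2) by blast
qed

lemma inf_mem_convex_hull:
  fixes P :: "(real ^ 'n::finite) set"
  assumes "\<And>d z. z \<in> P \<Longrightarrow> 0 \<le> d \<Longrightarrow> d \<le> 1 \<Longrightarrow> d * z \<in> P"
    and "y \<in> convex hull P" "0 \<le> y" "0 \<le> v"
  shows "inf y v \<in> convex hull P"
proof -
  define d :: "real ^ 'n" where "d = (\<chi> j. if y $ j = 0 then 0 else min 1 (v $ j / y $ j))"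
  have "0 \<le> d" "d \<le> 1"
    using assms(3,4) by (auto simp: d_def less_eq_vec_def one_vec_def)
  moreover have "d $ j * y $ j = min (y $ j) (v $ j)" for j
  proof (cases "y $ j = 0")
    case False
    then have "0 < y $ j" using assms(3) by (simp add: less_eq_vec_def order_less_le)
    then show ?thesis by (simp add: d_def min_mult_distrib_right min_def field_simps)
  qed (use assms(4) in \<open>simp add: d_def less_eq_vec_def\<close>)
  then have "d * y = inf y v"
    by (simp add: times_vec_def inf_vec_def vec_eq_iff inf_min)
  ultimately show ?thesis
    using convex_hull_closed_under_scaling[OF _ assms(2), of d] assms(1) by metis
qed

section \<open>Minimizer confining the play to a set of states\<close>

locale trap =
  fixes G :: "('s::finite, 'a::finite) sgame" and T :: "'n::finite \<Rightarrow> 's set"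
    and C :: "'s set" and stay :: "'s \<Rightarrow> 'a"
  assumes wf: "wf_game G"
    and stay: "\<And>u. u \<in> C \<Longrightarrow> u \<notin> smax G \<Longrightarrow>
      stay u \<in> av G u \<and> set_pmf (delta G u (stay u)) \<subseteq> C"
begin

definition max_exit :: "'s \<Rightarrow> 'a \<Rightarrow> bool" where
  "max_exit s a \<longleftrightarrow> s \<in> smax G \<and> (s, a) \<in> exits G C"

definition move :: "('s, 'a) strategy \<Rightarrow> 's \<Rightarrow> 'a pmf" where
  "move \<sigma> s = (if s \<in> smax G then \<sigma> ([], s) else return_pmf (stay s))"

definition exit_value :: "('s, 'a) strategy \<Rightarrow> 's \<Rightarrow> 'a \<Rightarrow> real ^ 'n" where
  "exit_value \<sigma> s a = pmf_mix (delta G s a) (guaranteed G T (residual \<sigma> [(s, a)]))"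

text \<open>\<open>exit_mset m \<sigma> s\<close> lists, for each way in which the play from \<open>s\<close> (Minimizer playing
  \<open>stay\<close>) takes a Maximizer exit of \<open>C\<close> within \<open>m\<close> steps, its probability together with
  the vector that the residual strategy of \<open>\<sigma>\<close> still guarantees after the exit.\<close>

fun exit_mset :: "nat \<Rightarrow> ('s, 'a) strategy \<Rightarrow> 's \<Rightarrow> (real \<times> (real ^ 'n)) multiset" where
  "exit_mset 0 \<sigma> s = {#}"
| "exit_mset (Suc m) \<sigma> s = (\<Sum>a\<in>UNIV. image_mset (scale_weight (pmf (move \<sigma> s) a))
     (if max_exit s a then {#(1, exit_value \<sigma> s a)#}
      else \<Sum>s'\<in>UNIV. image_mset (scale_weight (pmf (delta G s a) s'))
             (exit_mset m (residual \<sigma> [(s, a)]) s')))"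

declare exit_mset.simps(2) [simp del]

definition continuation :: "nat \<Rightarrow> ('s, 'a) strategy \<Rightarrow> 's \<Rightarrow> 'a \<Rightarrow> real ^ 'n" where
  "continuation m \<sigma> s a = (if max_exit s a then exit_value \<sigma> s a
     else pmf_mix (delta G s a) (\<lambda>s'. wsum (exit_mset m (residual \<sigma> [(s, a)]) s')))"

definition exit_points :: "(real ^ 'n) set" where
  "exit_points = {pmf_mix (delta G s a) x | s a x. max_exit s a \<and> (\<forall>s'. x s' \<in> achievable G T s')}"

lemma move_in_av:
  assumes "max_strategy G \<sigma>" "s \<in> C" "a \<in> set_pmf (move \<sigma> s)"
  shows "a \<in> av G s"
proof (cases "s \<in> smax G")
  case True
  then show ?thesis
    using assms unfolding move_def max_strategy_def is_strategy_def by fastforce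
qed (use assms stay in \<open>simp add: move_def\<close>)

lemma move_stays_in_C:
  assumes "max_strategy G \<sigma>" "s \<in> C" "a \<in> set_pmf (move \<sigma> s)" "\<not> max_exit s a"
  shows "set_pmf (delta G s a) \<subseteq> C"
  using assms stay move_in_av[OF assms(1-3)]
  by (auto simp: move_def max_exit_def exits_def split: if_splits)

lemma exit_mset_mono: "exit_mset m \<sigma> s \<subseteq># exit_mset (Suc m) \<sigma> s"
proof (induction m arbitrary: \<sigma> s)
  case (Suc m)
  show ?case
    unfolding exit_mset.simps(2)[of "Suc m" \<sigma> s] exit_mset.simps(2)[of m \<sigma> s]
    by (auto intro!: sum_mset_family_mono image_mset_subseteq_mono Suc.IH)
qed simp

lemma exit_mset_SucE:
  assumes "(w, g) \<in># exit_mset (Suc m) \<sigma> s"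
  obtains (exit) a where "max_exit s a" "w = pmf (move \<sigma> s) a" "g = exit_value \<sigma> s a"
  | (stay) a s' w' where "\<not> max_exit s a" "(w', g) \<in># exit_mset m (residual \<sigma> [(s, a)]) s'"
      "w = pmf (move \<sigma> s) a * (pmf (delta G s a) s' * w')"
  using assms
  by (auto simp: exit_mset.simps(2) set_mset_sum scale_weight_def split: if_splits)

lemma exit_mset_weight_nonneg: "(w, g) \<in># exit_mset m \<sigma> s \<Longrightarrow> 0 \<le> w"
proof (induction m arbitrary: \<sigma> s w g)
  case (Suc m)
  from Suc.prems show ?case
    by (cases rule: exit_mset_SucE) (auto dest: Suc.IH)
qed simp

lemma mass_exit_mset_nonneg: "0 \<le> mass (exit_mset m \<sigma> s)"
  by (rule mass_nonneg) (rule exit_mset_weight_nonneg)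

lemma exit_mset_points:
  "max_strategy G \<sigma> \<Longrightarrow> (w, g) \<in># exit_mset m \<sigma> s \<Longrightarrow> g \<in> exit_points"
proof (induction m arbitrary: \<sigma> s w g)
  case (Suc m)
  from Suc.prems(2) show ?case
  proof (cases rule: exit_mset_SucE)
    case (exit a)
    then show ?thesis
      unfolding exit_points_def exit_value_def
      using guaranteed_achievable[OF wf max_strategy_residual[OF Suc.prems(1)]] by blast
  qed (auto dest: Suc.IH[OF max_strategy_residual[OF Suc.prems(1)]])
qed simp

lemma exit_points_subset_unit_cube: "exit_points \<subseteq> unit_cube"
  unfolding exit_points_def
  using achievable_subset_unit_cube[OF wf] by (blast intro: pmf_mix_in_unit_cube)

lemma mass_exit_mset_le_1: "mass (exit_mset m \<sigma> s) \<le> 1"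
proof (induction m arbitrary: \<sigma> s)
  case (Suc m)
  have "mass (if max_exit s a then {#(1, exit_value \<sigma> s a)#}
      else \<Sum>s'\<in>UNIV. image_mset (scale_weight (pmf (delta G s a) s'))
             (exit_mset m (residual \<sigma> [(s, a)]) s')) \<le> 1" for a
  proof -
    have "(\<Sum>s'\<in>UNIV. pmf (delta G s a) s' * mass (exit_mset m (residual \<sigma> [(s, a)]) s'))
        \<le> (\<Sum>s'\<in>UNIV. pmf (delta G s a) s')"
      using Suc.IH mass_exit_mset_nonneg by (intro sum_mono mult_right_le_one_le) auto
    then show ?thesis by (simp add: mass_sum mass_scale_weight sum_pmf_UNIV)
  qed
  then have "(\<Sum>a\<in>UNIV. pmf (move \<sigma> s) a * mass (if max_exit s a then {#(1, exit_value \<sigma> s a)#}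
      else \<Sum>s'\<in>UNIV. image_mset (scale_weight (pmf (delta G s a) s'))
             (exit_mset m (residual \<sigma> [(s, a)]) s'))) \<le> (\<Sum>a\<in>UNIV. pmf (move \<sigma> s) a)"
    using mass_exit_mset_nonneg
    by (intro sum_mono mult_right_le_one_le) (auto simp: mass_sum mass_scale_weight intro!: sum_nonneg)
  then show ?case
    by (simp add: exit_mset.simps(2) mass_sum mass_scale_weight sum_pmf_UNIV)
qed simp

lemma wsum_exit_mset_Suc:
  "wsum (exit_mset (Suc m) \<sigma> s) = pmf_mix (move \<sigma> s) (continuation m \<sigma> s)"
  by (auto simp: exit_mset.simps(2) continuation_def wsum_sum wsum_scale_weight scaleR_sum_right
      intro!: sum.cong)

definition escapes :: "'s \<times> 'a \<Rightarrow> bool" where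
  "escapes x \<longleftrightarrow> fst x \<notin> C \<or> max_exit (fst x) (snd x)"

definition stayed_inside :: "('s \<times> 'a) list \<Rightarrow> 's \<Rightarrow> bool" where
  "stayed_inside p u \<longleftrightarrow> (\<forall>x\<in>set p. \<not> escapes x) \<and> u \<in> C"

definition trapping ::
  "'n \<Rightarrow> real \<Rightarrow> ('s, 'a) strategy \<Rightarrow> ('s, 'a) strategy \<Rightarrow> bool" where
  "trapping i \<epsilon> \<sigma> \<tau> \<longleftrightarrow>
     (\<forall>p u. stayed_inside p u \<and> u \<notin> smax G \<longrightarrow> \<tau> (p, u) = return_pmf (stay u)) \<and>
     (\<forall>p u a s'. stayed_inside p u \<and> max_exit u a \<longrightarrow>
        reach_prob G (residual \<sigma> (p @ [(u, a)])) (residual \<tau> (p @ [(u, a)])) s' (T i)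
          \<le> guaranteed G T (residual \<sigma> (p @ [(u, a)])) s' $ i + \<epsilon>)"

lemma trapping_residual:
  assumes "trapping i \<epsilon> \<sigma> \<tau>" "u \<in> C" "\<not> max_exit u b"
  shows "trapping i \<epsilon> (residual \<sigma> [(u, b)]) (residual \<tau> [(u, b)])"
proof -
  have cons: "stayed_inside p u' \<Longrightarrow> stayed_inside ((u, b) # p) u'" for p u'
    using assms(2,3) by (simp add: stayed_inside_def escapes_def)
  show ?thesis
    unfolding trapping_def
  proof (intro conjI allI impI)
    fix p u' assume "stayed_inside p u' \<and> u' \<notin> smax G"
    then show "residual \<tau> [(u, b)] (p, u') = return_pmf (stay u')"
      using assms(1) cons unfolding trapping_def residual_def by auto
  next
    fix p u' a s' assume "stayed_inside p u' \<and> max_exit u' a"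
    then have "reach_prob G (residual \<sigma> (((u, b) # p) @ [(u', a)]))
        (residual \<tau> (((u, b) # p) @ [(u', a)])) s' (T i)
        \<le> guaranteed G T (residual \<sigma> (((u, b) # p) @ [(u', a)])) s' $ i + \<epsilon>"
      using assms(1) cons unfolding trapping_def by blast
    then show "reach_prob G (residual (residual \<sigma> [(u, b)]) (p @ [(u', a)]))
        (residual (residual \<tau> [(u, b)]) (p @ [(u', a)])) s' (T i)
        \<le> guaranteed G T (residual (residual \<sigma> [(u, b)]) (p @ [(u', a)])) s' $ i + \<epsilon>"
      by simp
  qed
qed

lemma trapping_stay:
  "trapping i \<epsilon> \<sigma> \<tau> \<Longrightarrow> s \<in> C \<Longrightarrow> s \<notin> smax G \<Longrightarrow> \<tau> ([], s) = return_pmf (stay s)"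
  by (simp add: trapping_def stayed_inside_def)

lemma trapping_after_exit:
  assumes "trapping i \<epsilon> \<sigma> \<tau>" "s \<in> C" "max_exit s a"
  shows "reach_prob G (residual \<sigma> [(s, a)]) (residual \<tau> [(s, a)]) s' (T i)
    \<le> guaranteed G T (residual \<sigma> [(s, a)]) s' $ i + \<epsilon>"
proof -
  have "stayed_inside [] s" using assms(2) by (simp add: stayed_inside_def)
  then have "reach_prob G (residual \<sigma> ([] @ [(s, a)])) (residual \<tau> ([] @ [(s, a)])) s' (T i)
      \<le> guaranteed G T (residual \<sigma> ([] @ [(s, a)])) s' $ i + \<epsilon>"
    using assms(1,3) unfolding trapping_def by blast
  then show ?thesis by simp
qed

lemma reach_within_le_exit_wsum:
  assumes "T i \<inter> C = {}" "0 \<le> \<epsilon>"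
  shows "max_strategy G \<sigma> \<Longrightarrow> trapping i \<epsilon> \<sigma> \<tau> \<Longrightarrow> s \<in> C \<Longrightarrow>
    reach_within G \<sigma> \<tau> s (T i) m \<le> wsum (exit_mset m \<sigma> s) $ i + \<epsilon>"
proof (induction m arbitrary: \<sigma> \<tau> s)
  case 0
  then show ?case using assms by (auto simp: reach_within_0)
next
  case (Suc m)
  let ?R = "\<lambda>a s'. reach_within G (residual \<sigma> [(s, a)]) (residual \<tau> [(s, a)]) s' (T i) m"
  have step: "(\<Sum>s'\<in>UNIV. pmf (delta G s a) s' * ?R a s') \<le> continuation m \<sigma> s a $ i + \<epsilon>"
    if a: "a \<in> set_pmf (move \<sigma> s)" for a
  proof (cases "max_exit s a")
    case True
    have "?R a s' \<le> guaranteed G T (residual \<sigma> [(s, a)]) s' $ i + \<epsilon>" for s'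
      using reach_within_le_reach_prob trapping_after_exit[OF Suc.prems(2,3) True] by (rule order_trans)
    then show ?thesis
      using True by (simp add: continuation_def exit_value_def sum_pmf_mult_le_plus)
  next
    case False
    have "?R a s' \<le> wsum (exit_mset m (residual \<sigma> [(s, a)]) s') $ i + \<epsilon>"
      if "s' \<in> set_pmf (delta G s a)" for s'
    proof -
      have "s' \<in> C" using move_stays_in_C[OF Suc.prems(1,3) a False] that by blast
      then show ?thesis
        by (rule Suc.IH[OF max_strategy_residual[OF Suc.prems(1)] trapping_residual[OF Suc.prems(2,3) False]])
    qed
    then show ?thesis
      using False by (simp add: continuation_def sum_pmf_mult_le_plus)
  qed
  have "s \<notin> T i" using assms(1) Suc.prems(3) by auto
  moreover note trapping_stay[OF Suc.prems(2,3)]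
  ultimately have "reach_within G \<sigma> \<tau> s (T i) (Suc m) =
      (\<Sum>a\<in>UNIV. pmf (move \<sigma> s) a * (\<Sum>s'\<in>UNIV. pmf (delta G s a) s' * ?R a s'))"
    by (simp add: reach_within_Suc move_def)
  also have "\<dots> \<le> (\<Sum>a\<in>UNIV. pmf (move \<sigma> s) a * continuation m \<sigma> s a $ i) + \<epsilon>"
    using step by (rule sum_pmf_mult_le_plus)
  also have "\<dots> = wsum (exit_mset (Suc m) \<sigma> s) $ i + \<epsilon>"
    by (simp add: wsum_exit_mset_Suc)
  finally show ?case .
qed

fun first_escape :: "('s \<times> 'a) list \<Rightarrow> nat option" where
  "first_escape [] = None"
| "first_escape (x # xs) = (if escapes x then Some 0 else map_option Suc (first_escape xs))"

lemma first_escape_append: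
  "\<forall>x\<in>set xs. \<not> escapes x \<Longrightarrow> escapes y \<Longrightarrow> first_escape (xs @ y # zs) = Some (length xs)"
  by (induction xs) auto

lemma first_escape_None: "\<forall>x\<in>set xs. \<not> escapes x \<Longrightarrow> first_escape xs = None"
  by (induction xs) auto

definition eps_response ::
  "('s, 'a) strategy \<Rightarrow> 'n \<Rightarrow> real \<Rightarrow> ('s \<times> 'a) list \<Rightarrow> 's \<Rightarrow> ('s, 'a) strategy" where
  "eps_response \<sigma> i \<epsilon> p s' = (SOME \<tau>. min_strategy G \<tau> \<and>
     reach_prob G (residual \<sigma> p) \<tau> s' (T i) \<le> guaranteed G T (residual \<sigma> p) s' $ i + \<epsilon>)"

lemma eps_response:
  assumes "0 < \<epsilon>"
  shows "min_strategy G (eps_response \<sigma> i \<epsilon> p s')"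
    and "reach_prob G (residual \<sigma> p) (eps_response \<sigma> i \<epsilon> p s') s' (T i)
      \<le> guaranteed G T (residual \<sigma> p) s' $ i + \<epsilon>"
  using someI_ex[OF guaranteed_approx[OF wf assms]] unfolding eps_response_def by blast+

text \<open>Minimizer plays \<open>stay\<close> until the first escape from \<open>C\<close> and afterwards answers the
  residual strategy of Maximizer \<open>\<epsilon>\<close>-optimally for the objective \<open>T i\<close>.\<close>

definition trap_strategy :: "('s, 'a) strategy \<Rightarrow> 'n \<Rightarrow> real \<Rightarrow> ('s, 'a) hist \<Rightarrow> 'a pmf" where
  "trap_strategy \<sigma> i \<epsilon> h = (case first_escape (fst h) of
     Some j \<Rightarrow> eps_response \<sigma> i \<epsilon> (take (Suc j) (fst h))
       (hist_start (drop (Suc j) (fst h), snd h)) (drop (Suc j) (fst h), snd h)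
   | None \<Rightarrow> if snd h \<notin> smax G \<and> snd h \<in> C then return_pmf (stay (snd h)) else default_strategy G h)"

lemma trap_strategy_min_strategy:
  assumes "0 < \<epsilon>"
  shows "min_strategy G (trap_strategy \<sigma> i \<epsilon>)"
  unfolding min_strategy_def is_strategy_def
proof (intro allI impI)
  fix h :: "('s, 'a) hist"
  assume h: "snd h \<in> - smax G"
  show "set_pmf (trap_strategy \<sigma> i \<epsilon> h) \<subseteq> av G (snd h)"
  proof (cases "first_escape (fst h)")
    case None
    then show ?thesis
      using h stay default_strategy_is_strategy[OF wf, of "- smax G"]
      by (cases h) (auto simp: trap_strategy_def is_strategy_def)
  next
    case (Some j)
    then show ?thesis
      using h eps_response(1)[OF assms] by (auto simp: trap_strategy_def min_strategy_def is_strategy_def)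
  qed
qed

lemma trap_strategy_trapping:
  assumes "0 < \<epsilon>"
  shows "trapping i \<epsilon> \<sigma> (trap_strategy \<sigma> i \<epsilon>)"
  unfolding trapping_def
proof (intro conjI allI impI)
  fix p u assume "stayed_inside p u \<and> u \<notin> smax G"
  then show "trap_strategy \<sigma> i \<epsilon> (p, u) = return_pmf (stay u)"
    by (auto simp: trap_strategy_def stayed_inside_def first_escape_None)
next
  fix p u a s' assume pu: "stayed_inside p u \<and> max_exit u a"
  then have "first_escape ((p @ [(u, a)]) @ rest) = Some (length p)" for rest
    using first_escape_append[of p "(u, a)" rest] by (simp add: stayed_inside_def escapes_def)
  then have "residual (trap_strategy \<sigma> i \<epsilon>) (p @ [(u, a)]) h =
      eps_response \<sigma> i \<epsilon> (p @ [(u, a)]) (hist_start h) h" for h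
    unfolding residual_def trap_strategy_def by simp
  then have "reach_prob G (residual \<sigma> (p @ [(u, a)])) (residual (trap_strategy \<sigma> i \<epsilon>) (p @ [(u, a)])) s' (T i)
      = reach_prob G (residual \<sigma> (p @ [(u, a)])) (eps_response \<sigma> i \<epsilon> (p @ [(u, a)]) s') s' (T i)"
    by (intro reach_prob_cong_start) simp
  also have "\<dots> \<le> guaranteed G T (residual \<sigma> (p @ [(u, a)])) s' $ i + \<epsilon>"
    by (rule eps_response(2)[OF assms])
  finally show "reach_prob G (residual \<sigma> (p @ [(u, a)])) (residual (trap_strategy \<sigma> i \<epsilon>) (p @ [(u, a)])) s' (T i)
      \<le> guaranteed G T (residual \<sigma> (p @ [(u, a)])) s' $ i + \<epsilon>" .
qed

lemma exit_wsum_limitE: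
  assumes "max_strategy G \<sigma>"
  obtains y where "y \<in> convex hull (exit_points \<union> {0})" "\<And>m. wsum (exit_mset m \<sigma> s) \<le> y"
proof -
  define S where "S m = wsum (exit_mset m \<sigma> s)" for m
  have weights: "0 \<le> w \<and> g \<in> exit_points" if "(w, g) \<in># exit_mset m \<sigma> s" for w g m
    using exit_mset_weight_nonneg[OF that] exit_mset_points[OF assms that] by blast
  have bounds: "0 \<le> w \<and> 0 \<le> g $ j \<and> g $ j \<le> 1" if "(w, g) \<in># exit_mset m \<sigma> s" for w g m j
    using weights[OF that] exit_points_subset_unit_cube unfolding unit_cube_def by blast
  have inc: "incseq (\<lambda>m. S m $ j)" for j
  proof (rule incseq_SucI)
    fix m
    show "S m $ j \<le> S (Suc m) $ j"
      unfolding S_def by (rule wsum_component_mono[OF exit_mset_mono]) (use bounds in blast)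
  qed
  have bdd: "bdd_above (range (\<lambda>m. S m $ j))" for j
  proof (rule bdd_aboveI[of _ 1])
    fix x assume "x \<in> range (\<lambda>m. S m $ j)"
    then obtain m where "x = S m $ j" by blast
    moreover have "S m $ j \<le> mass (exit_mset m \<sigma> s)"
      unfolding S_def by (rule wsum_component_le_mass) (use bounds in blast)
    ultimately show "x \<le> 1" using mass_exit_mset_le_1[of m \<sigma> s] by linarith
  qed
  define y where "y = (\<chi> j. SUP m. S m $ j)"
  have "S \<longlonglongrightarrow> y"
    unfolding y_def by (intro vec_tendstoI) (simp add: LIMSEQ_incseq_SUP[OF bdd inc])
  have "y \<in> convex hull (exit_points \<union> {0})"
  proof (rule lim_wsum_in_convex[OF convex_convex_hull, where E = "\<lambda>m. exit_mset m \<sigma> s"])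
    show "0 \<in> convex hull (exit_points \<union> {0})" by (simp add: hull_inc)
    show "0 \<le> w \<and> g \<in> convex hull (exit_points \<union> {0})" if "(w, g) \<in># exit_mset m \<sigma> s" for m w g
      using weights[OF that] by (blast intro: hull_inc)
  qed (use exit_mset_mono mass_exit_mset_le_1 \<open>S \<longlonglongrightarrow> y\<close>[unfolded S_def] in auto)
  moreover have "S m \<le> y" for m
    using cSUP_upper[OF _ bdd] by (simp add: y_def less_eq_vec_def)
  ultimately show thesis using that unfolding S_def by blast
qed

lemma achievable_component_le_exit_wsum_bound:
  assumes "s \<in> C" "max_strategy G \<sigma>" "\<And>\<tau>. min_strategy G \<tau> \<Longrightarrow> v $ i \<le> reach_prob G \<sigma> \<tau> s (T i)"
    and "\<And>m. wsum (exit_mset m \<sigma> s) \<le> y" "T i \<inter> C = {}"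
  shows "v $ i \<le> y $ i"
proof (rule field_le_epsilon)
  fix \<epsilon> :: real
  assume "0 < \<epsilon>"
  have "v $ i \<le> reach_prob G \<sigma> (trap_strategy \<sigma> i \<epsilon>) s (T i)"
    using assms(3) trap_strategy_min_strategy[OF \<open>0 < \<epsilon>\<close>] by blast
  also have "\<dots> \<le> y $ i + \<epsilon>"
  proof (rule reach_prob_le)
    fix m
    have "reach_within G \<sigma> (trap_strategy \<sigma> i \<epsilon>) s (T i) m \<le> wsum (exit_mset m \<sigma> s) $ i + \<epsilon>"
      using reach_within_le_exit_wsum[OF assms(5) _ assms(2) trap_strategy_trapping assms(1)]
        \<open>0 < \<epsilon>\<close> by simp
    then show "reach_within G \<sigma> (trap_strategy \<sigma> i \<epsilon>) s (T i) m \<le> y $ i + \<epsilon>"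
      using assms(4)[of m] by (simp add: less_eq_vec_def add_increasing2 order_trans)
  qed
  finally show "v $ i \<le> y $ i + \<epsilon>" .
qed

lemma exit_points_scale:
  assumes "z \<in> exit_points" "0 \<le> d" "d \<le> 1"
  shows "d * z \<in> exit_points"
proof -
  obtain s a x where z: "z = pmf_mix (delta G s a) x" "max_exit s a"
    and x: "\<And>s'. x s' \<in> achievable G T s'"
    using assms(1) unfolding exit_points_def by blast
  have "d * x s' \<in> achievable G T s'" for s'
  proof (rule achievable_downward_closed[OF x])
    have "0 \<le> x s'"
      using achievable_subset_unit_cube[OF wf] x by (auto simp: unit_cube_def less_eq_vec_def)
    then show "0 \<le> d * x s'" "d * x s' \<le> x s'"
      using assms(2,3)
      by (auto simp: less_eq_vec_def times_vec_def one_vec_def intro: mult_left_le_one_le)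
  qed
  moreover have "d * z = pmf_mix (delta G s a) (\<lambda>s'. d * x s')"
    unfolding z by (simp add: sum_distrib_left mult_scaleR_right)
  ultimately show ?thesis
    using z(2) unfolding exit_points_def
    by (intro CollectI exI[of _ s] exI[of _ a] exI[of _ "\<lambda>s'. d * x s'"]) simp
qed

lemma exit_points_subset_exit_choices:
  assumes "\<And>s. achievable G T s \<subseteq> U s"
  shows "exit_points \<subseteq> exit_choices G T U C"
  unfolding exit_points_def max_exit_def
  using assms achievable_subset_unit_cube[OF wf]
  by (blast intro: exit_choicesI pmf_mix_in_fsa)

lemma achievable_subset_best_exit:
  assumes U: "\<And>s. achievable G T s \<subseteq> U s" and "s \<in> C"
  shows "achievable G T s \<subseteq> best_exit G T U C"
proof
  fix v assume v: "v \<in> achievable G T s"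
  then obtain \<sigma> where \<sigma>: "max_strategy G \<sigma>"
    "\<And>\<tau> j. min_strategy G \<tau> \<Longrightarrow> v $ j \<le> reach_prob G \<sigma> \<tau> s (T j)"
    unfolding achievable_def by blast
  obtain y where y: "y \<in> convex hull (exit_points \<union> {0})" "\<And>m. wsum (exit_mset m \<sigma> s) \<le> y"
    using exit_wsum_limitE[OF \<sigma>(1)] by blast
  have "0 \<le> y" using y(2)[of 0] by simp
  have "v \<in> unit_cube" using v achievable_subset_unit_cube[OF wf] by blast
  then have "0 \<le> v" by (simp add: unit_cube_def less_eq_vec_def)
  have "exit_points \<union> {0} \<subseteq> exit_choices G T U C"
    using exit_points_subset_exit_choices[OF U] zero_mem_exit_choices U zero_achievable[OF wf]
    by blast
  moreover have "inf y v \<in> convex hull (exit_points \<union> {0})"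
    using exit_points_scale y(1) \<open>0 \<le> y\<close> \<open>0 \<le> v\<close>
    by (intro inf_mem_convex_hull) (auto simp: mult_zero_right)
  ultimately have "inf y v \<in> convex hull exit_choices G T U C"
    using hull_mono by blast
  moreover have "inf y v $ j = v $ j" if "T j \<inter> C = {}" for j
    using achievable_component_le_exit_wsum_bound[OF \<open>s \<in> C\<close> \<sigma> y(2) that]
    by (simp add: inf_vec_def inf_min)
  ultimately show "v \<in> best_exit G T U C"
    using \<open>v \<in> unit_cube\<close> \<open>0 \<le> y\<close> \<open>0 \<le> v\<close>
    by (intro best_exit_memI[where b = "inf y v"]) auto
qed

end

section \<open>Soundness of deflation\<close>

lemma EC_has_staying_action:
  assumes "is_EC G Sr Avr C" "\<And>s. Avr s \<subseteq> av G s" "u \<in> C"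
  shows "\<exists>a\<in>av G u. set_pmf (delta G u a) \<subseteq> C"
proof -
  obtain B where B: "B \<noteq> {}" "B \<subseteq> {(s, a). s \<in> C \<and> a \<in> Avr s}"
    "\<forall>(s, a) \<in> B. set_pmf (delta G s a) \<subseteq> C"
    "\<forall>s\<in>C. \<forall>t\<in>C. (s, t) \<in> {(u, v). \<exists>a. (u, a) \<in> B \<and> v \<in> set_pmf (delta G u a)}\<^sup>*"
    using assms(1) unfolding is_EC_def by blast
  obtain u0 b0 where ub0: "(u0, b0) \<in> B" using B(1) by auto
  then have "u0 \<in> C" using B(2) by auto
  have "\<exists>a. (u, a) \<in> B"
  proof (cases "u = u0")
    case False
    have "(u, u0) \<in> {(u, v). \<exists>a. (u, a) \<in> B \<and> v \<in> set_pmf (delta G u a)}\<^sup>*"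
      using B(4) assms(3) \<open>u0 \<in> C\<close> by blast
    then show ?thesis using False by (cases rule: converse_rtranclE) auto
  qed (use ub0 in auto)
  then show ?thesis using B(2,3) assms(2) by blast
qed

lemma find_SECs_has_staying_action:
  assumes "C' \<in> find_SECs G T C L R" "u \<in> C'"
  shows "\<exists>a\<in>av G u. set_pmf (delta G u a) \<subseteq> C'"
proof -
  let ?Av = "\<lambda>s. if s \<in> C \<inter> - smax G then argmin_acts G T L s (SOME d. d \<in> R) else av G s"
  have "is_EC G C ?Av C'"
    using assms(1) unfolding find_SECs_def Let_def MECs_def by auto
  moreover have "?Av s \<subseteq> av G s" for s
    by (auto simp: argmin_acts_def)
  ultimately show ?thesis using assms(2) by (rule EC_has_staying_action)
qed

lemma achievable_subset_best_exit_if_confinable: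
  assumes "wf_game G" "\<And>s. achievable G T s \<subseteq> U s"
    and "\<And>u. u \<in> C \<Longrightarrow> u \<notin> smax G \<Longrightarrow> \<exists>a\<in>av G u. set_pmf (delta G u a) \<subseteq> C"
    and "s \<in> C"
  shows "achievable G T s \<subseteq> best_exit G T U C"
proof -
  define stay where "stay u = (SOME a. a \<in> av G u \<and> set_pmf (delta G u a) \<subseteq> C)" for u
  interpret trap G T C stay
  proof
    fix u assume "u \<in> C" "u \<notin> smax G"
    then show "stay u \<in> av G u \<and> set_pmf (delta G u (stay u)) \<subseteq> C"
      unfolding stay_def using assms(3) by (metis (no_types, lifting) someI_ex)
  qed (rule assms(1))
  show ?thesis using achievable_subset_best_exit assms(2,4) .
qed

lemma get_regions_coverE:
  assumes "v \<in> unit_cube" "v \<noteq> 0"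
  obtains R where "R \<in> get_regions G T C L" "v \<in> region_pts R"
proof -
  define R where
    "R = {d \<in> Dirs. \<forall>u \<in> C \<inter> - smax G. d \<in> region_B G T L u (argmin_acts G T L u (dir v))}"
  have "dir v \<in> R"
    using assms unfolding R_def region_B_def Dirs_def by auto
  then have "R \<in> get_regions G T C L"
    unfolding get_regions_def
    by (auto simp: R_def intro!: exI[of _ "\<lambda>u. argmin_acts G T L u (dir v)"])
  moreover have "v \<in> region_pts R"
    using assms(1) \<open>dir v \<in> R\<close> by (simp add: region_pts_def)
  ultimately show thesis by (rule that)
qed

lemma deflate_SECs_subset: "0 \<in> U s \<Longrightarrow> deflate_SECs G T L U s \<subseteq> U s"
  by (auto simp: deflate_SECs_def)

lemma deflate_SECs_memI:
  assumes "C \<in> MECs G UNIV (av G)" "s \<in> C" "R \<in> get_regions G T C L"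
    and "v \<in> U s" "v \<in> region_pts R"
    and "\<And>C'. C' \<in> find_SECs G T C L R \<Longrightarrow> s \<in> C' \<Longrightarrow> v \<in> best_exit G T U C'"
  shows "v \<in> deflate_SECs G T L U s"
proof -
  have "v \<in> (\<Union>C \<in> {C \<in> MECs G UNIV (av G). s \<in> C}. \<Union>R \<in> get_regions G T C L.
      (if \<exists>C' \<in> find_SECs G T C L R. s \<in> C'
       then (\<Union>C' \<in> {C' \<in> find_SECs G T C L R. s \<in> C'}. U s \<inter> best_exit G T U C' \<inter> region_pts R)
       else U s \<inter> region_pts R))"
    using assms by (intro UN_I[of C] UN_I[of R]) auto
  then show ?thesis
    using assms(1,2) unfolding deflate_SECs_def by auto
qed

lemma achievable_subset_deflate_SECs:
  assumes wf: "wf_game G" and U: "\<And>s. achievable G T s \<subseteq> U s"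
  shows "achievable G T s \<subseteq> deflate_SECs G T L U s"
proof
  fix v assume v: "v \<in> achievable G T s"
  then have "v \<in> U s" using U by blast
  show "v \<in> deflate_SECs G T L U s"
  proof (cases "v \<noteq> 0 \<and> (\<exists>C \<in> MECs G UNIV (av G). s \<in> C)")
    case True
    then obtain C where C: "C \<in> MECs G UNIV (av G)" "s \<in> C" by blast
    have "v \<in> unit_cube" using achievable_subset_unit_cube[OF wf] v by blast
    then obtain R where R: "R \<in> get_regions G T C L" "v \<in> region_pts R"
      by (rule get_regions_coverE) (use True in simp)
    show ?thesis
    proof (rule deflate_SECs_memI[where U = U, OF C R(1) \<open>v \<in> U s\<close> R(2)])
      fix C' assume "C' \<in> find_SECs G T C L R" "s \<in> C'"
      then show "v \<in> best_exit G T U C'"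
        using achievable_subset_best_exit_if_confinable[OF wf U _ \<open>s \<in> C'\<close>]
          find_SECs_has_staying_action v by blast
    qed
  qed (use \<open>v \<in> U s\<close> in \<open>auto simp: deflate_SECs_def\<close>)
qed

theorem lemma4p4:
  fixes G :: "('s::finite, 'a::finite) sgame"
    and T :: "'n::finite \<Rightarrow> 's set"
    and L U :: "'s \<Rightarrow> (real ^ 'n) set"
  assumes "wf_game G"
    and "\<And>s. L s \<subseteq> unit_cube" and "\<And>s. U s \<subseteq> unit_cube"
    and "\<And>s. L s \<subseteq> achievable G T s"
    and "\<And>s. achievable G T s \<subseteq> U s"
  shows "\<forall>s. deflate_SECs G T L U s \<subseteq> U s \<and> achievable G T s \<subseteq> deflate_SECs G T L U s"
proof (intro allI conjI)
  fix s
  show "deflate_SECs G T L U s \<subseteq> U s"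
    using assms(5) zero_achievable[OF assms(1)] by (intro deflate_SECs_subset) blast
  show "achievable G T s \<subseteq> deflate_SECs G T L U s"
    using assms(1,5) by (rule achievable_subset_deflate_SECs)
qed

end
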